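(* Let $V$ be a finite-dimensional real representation of $SO(3)$ and $v\in V$. Then $\dim\mathbf{Cov}_2(v)\in\{1,2,3,4,6\}$, and the symmetry class of $\mathbf{Cov}_2(v)$ is: $[SO(3)]$ iff $\dim\mathbf{Cov}_2(v)=1$; $[O(2)]$ iff $\dim=2$; $[\mathbb{D}_2]$ iff $\dim=3$; $[\mathbb{Z}_2]$ iff $\dim=4$; $[\{1\}]$ iff $\dim=6$.
   Context: $\mathbf{Cov}_2(v)\subset\mathrm{Sym}^2(\mathbb{R}^3)$ is the set of values at $v$ of all $SO(3)$-equivariant polynomial maps $V\to\mathrm{Sym}^2(\mathbb{R}^3)$ (with action $g\star\mathbf{a}=g\mathbf{a}g^{T}$); it is a linear subspace. The symmetry group of a subspace is the set of $g\in SO(3)$ fixing each element, and its symmetry class is its conjugacy class. $O(2)$: generated by rotations about the $z$-axis and the rotation by $\pi$ about the $x$-axis; $\mathbb{D}_2$: identity and rotations by $\pi$ about the three coordinate axes; $\mathbb{Z}_2$: identity and the rotation by $\pi$ about the $z$-axis. *)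

theory Defs
  imports "HOL-Analysis.Analysis"
begin

type_synonym mat3 = "real^3^3"

definition SO3 :: "mat3 set" where
  "SO3 = {g. transpose g ** g = mat 1 \<and> det g = 1}"

definition SO3_rep :: "(mat3 \<Rightarrow> 'v::euclidean_space \<Rightarrow> 'v) \<Rightarrow> bool" where
  "SO3_rep rho \<longleftrightarrow>
     (\<forall>g\<in>SO3. linear (rho g)) \<and>
     rho (mat 1) = id \<and>
     (\<forall>g\<in>SO3. \<forall>h\<in>SO3. rho (g ** h) = rho g \<circ> rho h) \<and>
     (\<forall>x. continuous_on SO3 (\<lambda>g. rho g x))"

inductive_set poly_fun :: "('v::euclidean_space \<Rightarrow> real) set" where
  const: "(\<lambda>x. c) \<in> poly_fun"
| lin: "linear l \<Longrightarrow> l \<in> poly_fun"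
| add: "p \<in> poly_fun \<Longrightarrow> q \<in> poly_fun \<Longrightarrow> (\<lambda>x. p x + q x) \<in> poly_fun"
| mult: "p \<in> poly_fun \<Longrightarrow> q \<in> poly_fun \<Longrightarrow> (\<lambda>x. p x * q x) \<in> poly_fun"

text \<open>Sym^2(R^3) = symmetric 3x3 matrices, with action g * a = g a g^T.\<close>
definition Sym2 :: "mat3 set" where
  "Sym2 = {a. transpose a = a}"

definition act2 :: "mat3 \<Rightarrow> mat3 \<Rightarrow> mat3" where
  "act2 g a = g ** a ** transpose g"

definition equiv_poly_map :: "(mat3 \<Rightarrow> 'v::euclidean_space \<Rightarrow> 'v) \<Rightarrow> ('v \<Rightarrow> mat3) \<Rightarrow> bool" where
  "equiv_poly_map rho f \<longleftrightarrow>
     (\<forall>i j. (\<lambda>x. f x $ i $ j) \<in> poly_fun) \<and>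
     (\<forall>x. f x \<in> Sym2) \<and>
     (\<forall>g\<in>SO3. \<forall>x. f (rho g x) = act2 g (f x))"

definition Cov2 :: "(mat3 \<Rightarrow> 'v::euclidean_space \<Rightarrow> 'v) \<Rightarrow> 'v \<Rightarrow> mat3 set" where
  "Cov2 rho v = {f v | f. equiv_poly_map rho f}"

definition sym_group :: "mat3 set \<Rightarrow> mat3 set" where
  "sym_group S = {g\<in>SO3. \<forall>a\<in>S. act2 g a = a}"

definition has_sym_class :: "mat3 set \<Rightarrow> mat3 set \<Rightarrow> bool" where
  "has_sym_class S H \<longleftrightarrow> (\<exists>h\<in>SO3. sym_group S = (\<lambda>g. h ** g ** transpose h) ` H)"

definition rotz :: "real \<Rightarrow> mat3" where
  "rotz t = vector [vector [cos t, - sin t, 0], vector [sin t, cos t, 0], vector [0, 0, 1]]"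

definition diag3 :: "real \<Rightarrow> real \<Rightarrow> real \<Rightarrow> mat3" where
  "diag3 a b c = vector [vector [a, 0, 0], vector [0, b, 0], vector [0, 0, c]]"

definition O2 :: "mat3 set" where
  "O2 = range rotz \<union> (\<lambda>t. rotz t ** diag3 1 (-1) (-1)) ` UNIV"

definition D2 :: "mat3 set" where
  "D2 = {mat 1, diag3 1 (-1) (-1), diag3 (-1) 1 (-1), diag3 (-1) (-1) 1}"

definition Z2 :: "mat3 set" where
  "Z2 = {mat 1, diag3 (-1) (-1) 1}"

end

theory Submission
  imports Defs
begin

(* Sums, scalar multiples and pointwise squares of equivariant polynomial maps are again
   equivariant polynomial maps, so Cov2(v) is a unital Jordan subalgebra of Sym^2: a subspace
   containing the identity and closed under squaring. Nothing else about Cov2(v) is used.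

   Up to a rotation, such a subalgebra W is one of five normal forms: the scalars, the matrices
   diag(a,a,b), the diagonal matrices, the block-diagonal matrices with blocks of sizes 2 and 1, and
   all of Sym^2. Indeed, if W contains a non-scalar A, diagonalise A by a rotation; a quadratic
   polynomial in A is then a multiple of a rank-one projection, which a rotation moves to E33.
   Unless W consists of the matrices diag(a,a,b), Jordan products with E33 and a rotation about the
   z-axis produce E11 as well, hence also E22 = 1 - E11 - E33, and then W is determined by which of
   the off-diagonal units Q12, Q13, Q23 it contains (any two of them generate the third). The normal
   forms have dimensions 1, 2, 3, 4, 6 and symmetry groups SO(3), O(2), D2, Z2, {1}, which are
   pairwise non-conjugate. *)

section \<open>Rotations acting on symmetric matrices\<close>

lemmas mat3_simps = matrix_matrix_mult_def matrix_vector_mult_def transpose_def mat_def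
  sum_3 forall_3 act2_def diag3_def rotz_def

lemma matrix_add_rdistrib: "(A + B) ** C = A ** C + B ** C"
  by (vector matrix_matrix_mult_def sum.distrib[symmetric] field_simps)

lemma subspace_scaleR_cancel:
  assumes "subspace S" "c *\<^sub>R x \<in> S" "c \<noteq> 0"
  shows "x \<in> S"
  using subspace_scale[OF assms(1,2), of "inverse c"] assms(3) by simp

lemma SO3_eq_rotation_matrix: "SO3 = {g. rotation_matrix g}"
  by (auto simp: SO3_def rotation_matrix_def orthogonal_matrix)

lemma SO3_transpose_mult: "g \<in> SO3 \<Longrightarrow> transpose g ** g = mat 1"
  by (simp add: SO3_def)

lemma SO3_mult_transpose: "g \<in> SO3 \<Longrightarrow> g ** transpose g = mat 1"
  by (simp add: SO3_eq_rotation_matrix rotation_matrix_def orthogonal_matrix_def)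

lemma SO3_transpose: "g \<in> SO3 \<Longrightarrow> transpose g \<in> SO3"
  by (simp add: SO3_eq_rotation_matrix rotation_matrix_def)

lemma SO3_mult: "g \<in> SO3 \<Longrightarrow> h \<in> SO3 \<Longrightarrow> g ** h \<in> SO3"
  by (simp add: SO3_eq_rotation_matrix rotation_matrix_def orthogonal_matrix_mul det_mul)

lemma SO3_one: "mat 1 \<in> SO3"
  by (simp add: SO3_def transpose_mat)

lemma SO3_rotz: "rotz t \<in> SO3"
  by (simp add: SO3_def vec_eq_iff mat3_simps det_3 algebra_simps)

lemma SO3_diag3: "a * a = 1 \<Longrightarrow> b * b = 1 \<Longrightarrow> c * c = 1 \<Longrightarrow> a * b * c = 1 \<Longrightarrow> diag3 a b c \<in> SO3"
  by (simp add: SO3_def vec_eq_iff mat3_simps det_3)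

lemma SO3_maps_axis3:
  assumes "norm u = 1"
  obtains r where "r \<in> SO3" "r *v axis 3 1 = u"
  using rotation_matrix_exists_basis[of u 3] assms by (auto simp: SO3_eq_rotation_matrix)

lemma act2_mult: "act2 (g ** h) A = act2 g (act2 h A)"
  by (simp add: act2_def matrix_transpose_mul matrix_mul_assoc)

lemma act2_act2_transpose: "g \<in> SO3 \<Longrightarrow> act2 g (act2 (transpose g) A) = A"
  by (simp add: act2_def matrix_mul_assoc SO3_mult_transpose)
    (simp add: matrix_mul_assoc[symmetric] SO3_mult_transpose)

lemma act2_transpose_act2: "g \<in> SO3 \<Longrightarrow> act2 (transpose g) (act2 g A) = A"
  using act2_act2_transpose[of "transpose g" A] SO3_transpose by auto

lemma act2_one: "act2 (mat 1) A = A"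
  by (simp add: act2_def transpose_mat)

lemma act2_mat1: "g \<in> SO3 \<Longrightarrow> act2 g (mat 1) = mat 1"
  by (simp add: act2_def SO3_mult_transpose)

lemma act2_add: "act2 g (A + B) = act2 g A + act2 g B"
  by (simp add: act2_def matrix_add_ldistrib matrix_add_rdistrib)

lemma act2_scaleR: "act2 g (c *\<^sub>R A) = c *\<^sub>R act2 g A"
  by (simp add: act2_def matrix_scalar_ac scalar_matrix_assoc)

lemma linear_act2: "linear (act2 g)"
  by (rule linearI) (simp_all add: act2_add act2_scaleR)

lemma act2_matrix_mult:
  assumes "g \<in> SO3"
  shows "act2 g (A ** B) = act2 g A ** act2 g B"
proof -
  have "act2 g A ** act2 g B = g ** A ** (transpose g ** g) ** B ** transpose g"
    by (simp add: act2_def matrix_mul_assoc)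
  then show ?thesis
    using assms by (simp add: SO3_transpose_mult act2_def matrix_mul_assoc)
qed

lemma act2_Sym2: "A \<in> Sym2 \<Longrightarrow> act2 g A \<in> Sym2"
  by (simp add: Sym2_def act2_def matrix_transpose_mul matrix_mul_assoc)

lemma act2_image_transpose: "g \<in> SO3 \<Longrightarrow> act2 (transpose g) ` act2 g ` S = S"
  by (simp add: image_image act2_transpose_act2)

lemma dim_act2_image: "h \<in> SO3 \<Longrightarrow> dim (act2 h ` S) = dim S"
  by (rule dim_image_eq[OF linear_act2]) (metis act2_transpose_act2 inj_on_inverseI)

lemma Sym2_iff: "A \<in> Sym2 \<longleftrightarrow> A$2$1 = A$1$2 \<and> A$3$1 = A$1$3 \<and> A$3$2 = A$2$3"
  unfolding Sym2_def by (auto simp: vec_eq_iff transpose_def forall_3)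

definition proj :: "real^3 \<Rightarrow> mat3" where
  "proj u = (\<chi> i j. u$i * u$j)"

lemma act2_proj: "act2 g (proj u) = proj (g *v u)"
  by (simp add: vec_eq_iff mat3_simps proj_def algebra_simps)

section \<open>Unital Jordan subalgebras of Sym2\<close>

definition jordan_subalgebra :: "mat3 set \<Rightarrow> bool" where
  "jordan_subalgebra W \<longleftrightarrow> subspace W \<and> W \<subseteq> Sym2 \<and> mat 1 \<in> W \<and> (\<forall>A\<in>W. A ** A \<in> W)"

lemma
  assumes "jordan_subalgebra W"
  shows jordan_subalgebra_subspace: "subspace W"
    and jordan_subalgebra_Sym2: "W \<subseteq> Sym2"
    and jordan_subalgebra_mat1: "mat 1 \<in> W"
    and jordan_subalgebra_square: "A \<in> W \<Longrightarrow> A ** A \<in> W"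
  using assms by (auto simp: jordan_subalgebra_def)

lemma jordan_subalgebra_product:
  assumes J: "jordan_subalgebra W" and "A \<in> W" "B \<in> W"
  shows "A ** B + B ** A \<in> W"
proof -
  note sub = jordan_subalgebra_subspace[OF J]
  have "(A + B) ** (A + B) - A ** A - B ** B \<in> W"
    using assms by (intro subspace_diff[OF sub] subspace_add[OF sub] jordan_subalgebra_square[OF J])
  moreover have "(A + B) ** (A + B) - A ** A - B ** B = A ** B + B ** A"
    by (simp add: matrix_add_ldistrib matrix_add_rdistrib)
  ultimately show ?thesis by simp
qed

lemma jordan_subalgebra_act2_image:
  assumes "jordan_subalgebra W" "g \<in> SO3"
  shows "jordan_subalgebra (act2 g ` W)"
  unfolding jordan_subalgebra_def
proof (intro conjI)
  show "subspace (act2 g ` W)"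
    using assms(1) by (simp add: jordan_subalgebra_def linear_subspace_image linear_act2)
  show "act2 g ` W \<subseteq> Sym2"
    using assms(1) by (auto simp: jordan_subalgebra_def act2_Sym2)
  show "mat 1 \<in> act2 g ` W"
    using assms act2_mat1[of g] by (auto simp: jordan_subalgebra_def intro!: image_eqI[where x="mat 1"])
  show "\<forall>A\<in>act2 g ` W. A ** A \<in> act2 g ` W"
    using assms by (auto simp: jordan_subalgebra_def act2_matrix_mult[symmetric])
qed

lemma equiv_poly_map_zero: "equiv_poly_map rho (\<lambda>x. 0)"
  unfolding equiv_poly_map_def by (simp add: poly_fun.const Sym2_def act2_def transpose_def vec_eq_iff)

lemma equiv_poly_map_add:
  "equiv_poly_map rho f \<Longrightarrow> equiv_poly_map rho f' \<Longrightarrow> equiv_poly_map rho (\<lambda>x. f x + f' x)"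
  unfolding equiv_poly_map_def by (auto simp: poly_fun.add Sym2_def act2_add transpose_def vec_eq_iff)

lemma equiv_poly_map_scaleR: "equiv_poly_map rho f \<Longrightarrow> equiv_poly_map rho (\<lambda>x. c *\<^sub>R f x)"
  unfolding equiv_poly_map_def
  by (auto simp: poly_fun.mult[OF poly_fun.const] Sym2_def act2_scaleR transpose_def vec_eq_iff)

lemma equiv_poly_map_mat1: "equiv_poly_map rho (\<lambda>x. mat 1)"
  unfolding equiv_poly_map_def by (simp add: poly_fun.const Sym2_def transpose_mat act2_mat1)

lemma equiv_poly_map_square:
  assumes "equiv_poly_map rho f"
  shows "equiv_poly_map rho (\<lambda>x. f x ** f x)"
proof -
  have poly: "\<And>i j. (\<lambda>x. f x $ i $ j) \<in> poly_fun" and sym: "\<And>x. f x \<in> Sym2"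
    and equiv: "\<And>g x. g \<in> SO3 \<Longrightarrow> f (rho g x) = act2 g (f x)"
    using assms unfolding equiv_poly_map_def by auto
  have "(\<lambda>x. (f x ** f x) $ i $ j) \<in> poly_fun" for i j
    unfolding matrix_matrix_mult_def sum_3 by (simp add: poly_fun.add poly_fun.mult poly)
  moreover have "f x ** f x \<in> Sym2" for x
    using sym[of x] by (simp add: Sym2_def matrix_transpose_mul)
  moreover have "f (rho g x) ** f (rho g x) = act2 g (f x ** f x)" if "g \<in> SO3" for g x
    using equiv[OF that] act2_matrix_mult[OF that] by simp
  ultimately show ?thesis unfolding equiv_poly_map_def by auto
qed

lemma jordan_subalgebra_Cov2: "jordan_subalgebra (Cov2 rho v)"
  unfolding jordan_subalgebra_def
proof (intro conjI)
  show "subspace (Cov2 rho v)"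
    unfolding subspace_def Cov2_def
  proof (intro conjI ballI allI)
    show "0 \<in> {f v |f. equiv_poly_map rho f}"
      using equiv_poly_map_zero[of rho] by force
    fix A B assume "A \<in> {f v |f. equiv_poly_map rho f}" "B \<in> {f v |f. equiv_poly_map rho f}"
    then show "A + B \<in> {f v |f. equiv_poly_map rho f}"
      using equiv_poly_map_add by force
  next
    fix c A assume "A \<in> {f v |f. equiv_poly_map rho f}"
    then show "c *\<^sub>R A \<in> {f v |f. equiv_poly_map rho f}"
      using equiv_poly_map_scaleR by force
  qed
  show "Cov2 rho v \<subseteq> Sym2"
    unfolding Cov2_def equiv_poly_map_def by auto
  show "mat 1 \<in> Cov2 rho v"
    unfolding Cov2_def using equiv_poly_map_mat1[of rho] by force
  show "\<forall>A\<in>Cov2 rho v. A ** A \<in> Cov2 rho v"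
    unfolding Cov2_def using equiv_poly_map_square by force
qed

section \<open>Normal forms of Jordan subalgebras\<close>

definition scalar_mats :: "mat3 set" where
  "scalar_mats = range (\<lambda>c. c *\<^sub>R mat 1)"

definition axial_mats :: "mat3 set" where
  "axial_mats = {A\<in>Sym2. A$1$2 = 0 \<and> A$1$3 = 0 \<and> A$2$3 = 0 \<and> A$1$1 = A$2$2}"

definition diagonal_mats :: "mat3 set" where
  "diagonal_mats = {A\<in>Sym2. A$1$2 = 0 \<and> A$1$3 = 0 \<and> A$2$3 = 0}"

definition block_mats :: "mat3 set" where
  "block_mats = {A\<in>Sym2. A$1$3 = 0 \<and> A$2$3 = 0}"

definition normal_forms :: "mat3 set set" where
  "normal_forms = {scalar_mats, axial_mats, diagonal_mats, block_mats, Sym2}"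

definition rotated_normal_form :: "mat3 set \<Rightarrow> bool" where
  "rotated_normal_form W \<longleftrightarrow> (\<exists>h\<in>SO3. \<exists>S\<in>normal_forms. W = act2 h ` S)"

lemma rotated_normal_form_normal_forms: "S \<in> normal_forms \<Longrightarrow> rotated_normal_form S"
  unfolding rotated_normal_form_def using SO3_one by (force simp: act2_one)

lemma rotated_normal_form_act2_image:
  assumes g: "g \<in> SO3" and W: "rotated_normal_form (act2 g ` W)"
  shows "rotated_normal_form W"
proof -
  obtain h S where h: "h \<in> SO3" "S \<in> normal_forms" "act2 g ` W = act2 h ` S"
    using W unfolding rotated_normal_form_def by blast
  have "W = act2 (transpose g) ` act2 g ` W"
    using act2_image_transpose[OF g] by simp
  also have "\<dots> = act2 (transpose g ** h) ` S"
    using h(3) by (simp add: image_image act2_mult)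
  finally show ?thesis
    unfolding rotated_normal_form_def using h(2) SO3_mult[OF SO3_transpose[OF g] h(1)] by blast
qed

lemma act2_image_eqI:
  assumes "g \<in> SO3" "\<And>A. A \<in> S \<Longrightarrow> act2 g A \<in> T" "\<And>A. A \<in> T \<Longrightarrow> act2 (transpose g) A \<in> S"
  shows "T = act2 g ` S"
proof
  show "act2 g ` S \<subseteq> T" using assms(2) by auto
  show "T \<subseteq> act2 g ` S"
  proof
    fix A assume "A \<in> T"
    then have "A = act2 g (act2 (transpose g) A)" "act2 (transpose g) A \<in> S"
      using act2_act2_transpose[OF assms(1)] assms(3) by auto
    then show "A \<in> act2 g ` S" by blast
  qed
qed

definition quarter_turn_x :: mat3 where
  "quarter_turn_x = vector [vector [1,0,0], vector [0,0,-1], vector [0,1,0]]"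

definition quarter_turn_y :: mat3 where
  "quarter_turn_y = vector [vector [0,0,-1], vector [0,1,0], vector [1,0,0]]"

lemma SO3_quarter_turn_x: "quarter_turn_x \<in> SO3"
  by (simp add: SO3_def vec_eq_iff mat3_simps quarter_turn_x_def det_3)

lemma SO3_quarter_turn_y: "quarter_turn_y \<in> SO3"
  by (simp add: SO3_def vec_eq_iff mat3_simps quarter_turn_y_def det_3)

lemma rotated_normal_form_block_13: "rotated_normal_form {A\<in>Sym2. A$1$2 = 0 \<and> A$2$3 = 0}"
proof -
  have "{A\<in>Sym2. A$1$2 = 0 \<and> A$2$3 = 0} = act2 quarter_turn_x ` block_mats"
    by (rule act2_image_eqI[OF SO3_quarter_turn_x])
      (auto simp: block_mats_def Sym2_iff mat3_simps quarter_turn_x_def)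
  then show ?thesis
    unfolding rotated_normal_form_def normal_forms_def using SO3_quarter_turn_x by blast
qed

lemma rotated_normal_form_block_23: "rotated_normal_form {A\<in>Sym2. A$1$2 = 0 \<and> A$1$3 = 0}"
proof -
  have "{A\<in>Sym2. A$1$2 = 0 \<and> A$1$3 = 0} = act2 quarter_turn_y ` block_mats"
    by (rule act2_image_eqI[OF SO3_quarter_turn_y])
      (auto simp: block_mats_def Sym2_iff mat3_simps quarter_turn_y_def)
  then show ?thesis
    unfolding rotated_normal_form_def normal_forms_def using SO3_quarter_turn_y by blast
qed

definition E11 :: mat3 where "E11 = diag3 1 0 0"
definition E22 :: mat3 where "E22 = diag3 0 1 0"
definition E33 :: mat3 where "E33 = diag3 0 0 1"
definition Q12 :: mat3 where "Q12 = vector [vector [0,1,0], vector [1,0,0], vector [0,0,0]]"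
definition Q13 :: mat3 where "Q13 = vector [vector [0,0,1], vector [0,0,0], vector [1,0,0]]"
definition Q23 :: mat3 where "Q23 = vector [vector [0,0,0], vector [0,0,1], vector [0,1,0]]"

lemmas unit_defs = E11_def E22_def E33_def Q12_def Q13_def Q23_def diag3_def

lemma units_eq_proj_axis: "E11 = proj (axis 1 1)" "E22 = proj (axis 2 1)" "E33 = proj (axis 3 1)"
  by (simp_all add: vec_eq_iff forall_3 proj_def axis_def unit_defs)

lemma Sym2_decomposition:
  "A \<in> Sym2 \<Longrightarrow> A = A$1$1 *\<^sub>R E11 + A$2$2 *\<^sub>R E22 + A$3$3 *\<^sub>R E33
     + A$1$2 *\<^sub>R Q12 + A$1$3 *\<^sub>R Q13 + A$2$3 *\<^sub>R Q23"
  unfolding Sym2_iff by (simp add: vec_eq_iff forall_3 unit_defs)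

lemma jordan_product_units:
  assumes "B \<in> Sym2"
  shows "E11 ** (E22 ** B + B ** E22) + (E22 ** B + B ** E22) ** E11 = B$1$2 *\<^sub>R Q12"
    and "E11 ** (E33 ** B + B ** E33) + (E33 ** B + B ** E33) ** E11 = B$1$3 *\<^sub>R Q13"
    and "E22 ** (E33 ** B + B ** E33) + (E33 ** B + B ** E33) ** E22 = B$2$3 *\<^sub>R Q23"
  using assms unfolding Sym2_iff by (simp_all add: vec_eq_iff mat3_simps unit_defs)

lemma jordan_product_offdiagonal_units:
  "Q12 ** Q13 + Q13 ** Q12 = Q23" "Q12 ** Q23 + Q23 ** Q12 = Q13" "Q13 ** Q23 + Q23 ** Q13 = Q12"
  by (simp_all add: vec_eq_iff mat3_simps unit_defs)

lemma jordan_subalgebra_offdiagonal_dichotomy: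
  assumes J: "jordan_subalgebra W" and units: "E11 \<in> W" "E22 \<in> W" "E33 \<in> W"
  shows "Q12 \<in> W \<or> (\<forall>B\<in>W. B$1$2 = 0)" and "Q13 \<in> W \<or> (\<forall>B\<in>W. B$1$3 = 0)"
    and "Q23 \<in> W \<or> (\<forall>B\<in>W. B$2$3 = 0)"
proof -
  note prod = jordan_subalgebra_product[OF J]
  have "B$1$2 *\<^sub>R Q12 \<in> W" "B$1$3 *\<^sub>R Q13 \<in> W" "B$2$3 *\<^sub>R Q23 \<in> W" if B: "B \<in> W" for B
    using prod[OF units(1) prod[OF units(2) B]] prod[OF units(1) prod[OF units(3) B]]
      prod[OF units(2) prod[OF units(3) B]]
    by (simp_all add: jordan_product_units[OF subsetD[OF jordan_subalgebra_Sym2[OF J] B]])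
  then show "Q12 \<in> W \<or> (\<forall>B\<in>W. B$1$2 = 0)" "Q13 \<in> W \<or> (\<forall>B\<in>W. B$1$3 = 0)"
    "Q23 \<in> W \<or> (\<forall>B\<in>W. B$2$3 = 0)"
    using subspace_scaleR_cancel[OF jordan_subalgebra_subspace[OF J]] by blast+
qed

lemma jordan_subalgebra_memI:
  assumes J: "jordan_subalgebra W" and units: "E11 \<in> W" "E22 \<in> W" "E33 \<in> W"
    and A: "A \<in> Sym2" "A$1$2 = 0 \<or> Q12 \<in> W" "A$1$3 = 0 \<or> Q13 \<in> W" "A$2$3 = 0 \<or> Q23 \<in> W"
  shows "A \<in> W"
proof -
  note sub = jordan_subalgebra_subspace[OF J]
  have scaled: "c *\<^sub>R Q \<in> W" if "c = 0 \<or> Q \<in> W" for c Q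
    using that by (auto simp: subspace_0[OF sub] subspace_scale[OF sub])
  have "A$1$1 *\<^sub>R E11 + A$2$2 *\<^sub>R E22 + A$3$3 *\<^sub>R E33
      + A$1$2 *\<^sub>R Q12 + A$1$3 *\<^sub>R Q13 + A$2$3 *\<^sub>R Q23 \<in> W"
    using scaled[OF A(2)] scaled[OF A(3)] scaled[OF A(4)] units
    by (intro subspace_add[OF sub]) (simp_all add: subspace_scale[OF sub])
  then show ?thesis using Sym2_decomposition[OF A(1)] by simp
qed

lemma normal_form_if_diagonal_units:
  assumes J: "jordan_subalgebra W" and units: "E11 \<in> W" "E22 \<in> W" "E33 \<in> W"
  shows "rotated_normal_form W"
proof -
  note WS = jordan_subalgebra_Sym2[OF J]
  note mem = jordan_subalgebra_memI[OF J units]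
  note dichotomy = jordan_subalgebra_offdiagonal_dichotomy[OF J units]
  note prod = jordan_subalgebra_product[OF J]
  have "Q23 \<in> W" if "Q12 \<in> W" "Q13 \<in> W"
    using prod[OF that] by (simp add: jordan_product_offdiagonal_units)
  moreover have "Q13 \<in> W" if "Q12 \<in> W" "Q23 \<in> W"
    using prod[OF that] by (simp add: jordan_product_offdiagonal_units)
  moreover have "Q12 \<in> W" if "Q13 \<in> W" "Q23 \<in> W"
    using prod[OF that] by (simp add: jordan_product_offdiagonal_units)
  ultimately consider "Q12 \<in> W" "Q13 \<in> W" "Q23 \<in> W" | "Q12 \<in> W" "Q13 \<notin> W" "Q23 \<notin> W"
    | "Q12 \<notin> W" "Q13 \<in> W" "Q23 \<notin> W" | "Q12 \<notin> W" "Q13 \<notin> W" "Q23 \<in> W"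
    | "Q12 \<notin> W" "Q13 \<notin> W" "Q23 \<notin> W"
    by blast
  then show ?thesis
  proof cases
    case 1
    then have "W = Sym2" using mem WS by blast
    then show ?thesis by (simp add: rotated_normal_form_normal_forms normal_forms_def)
  next
    case 2
    then have "W = block_mats" using mem WS dichotomy unfolding block_mats_def by blast
    then show ?thesis by (simp add: rotated_normal_form_normal_forms normal_forms_def)
  next
    case 3
    then have "W = {A\<in>Sym2. A$1$2 = 0 \<and> A$2$3 = 0}" using mem WS dichotomy by blast
    then show ?thesis using rotated_normal_form_block_13 by simp
  next
    case 4
    then have "W = {A\<in>Sym2. A$1$2 = 0 \<and> A$1$3 = 0}" using mem WS dichotomy by blast
    then show ?thesis using rotated_normal_form_block_23 by simp
  next
    case 5
    then have "W = diagonal_mats" using mem WS dichotomy unfolding diagonal_mats_def by blast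
    then show ?thesis by (simp add: rotated_normal_form_normal_forms normal_forms_def)
  qed
qed

lemma normal_form_if_E11_E33:
  assumes J: "jordan_subalgebra W" and "E11 \<in> W" "E33 \<in> W"
  shows "rotated_normal_form W"
proof -
  have "mat 1 - E11 - E33 \<in> W"
    using assms jordan_subalgebra_mat1[OF J] by (intro subspace_diff[OF jordan_subalgebra_subspace[OF J]])
  moreover have "mat 1 - E11 - E33 = E22"
    by (simp add: vec_eq_iff mat3_simps unit_defs)
  ultimately show ?thesis
    using normal_form_if_diagonal_units[OF J] assms(2,3) by simp
qed

lemma act2_transpose_rotz_E33: "act2 (transpose (rotz t)) E33 = E33"
  by (simp add: vec_eq_iff mat3_simps unit_defs)

lemma normal_form_if_rotz_E11:
  assumes J: "jordan_subalgebra W" and "E33 \<in> W" and E11: "E11 \<in> act2 (transpose (rotz t)) ` W"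
  shows "rotated_normal_form W"
proof -
  let ?g = "transpose (rotz t)"
  have g: "?g \<in> SO3" by (rule SO3_transpose[OF SO3_rotz])
  have "E33 \<in> act2 ?g ` W"
    using imageI[OF assms(2), of "act2 ?g"] by (simp add: act2_transpose_rotz_E33)
  then have "rotated_normal_form (act2 ?g ` W)"
    using normal_form_if_E11_E33[OF jordan_subalgebra_act2_image[OF J g] E11] by simp
  then show ?thesis by (rule rotated_normal_form_act2_image[OF g])
qed

lemma sin_cos_squared_add_mult:
  fixes t :: real
  shows "r * (cos t * cos t) + r * (sin t * sin t) = r"
    and "cos t * (cos t * r) + sin t * (sin t * r) = r"
  using sin_cos_squared_add3[of t] by algebra+

lemma polar_coordinates:
  fixes a b r :: real
  assumes "r > 0" "a^2 + b^2 = r^2"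
  obtains t where "a = r * cos t" "b = r * sin t"
proof -
  have "(a/r)^2 + (b/r)^2 = 1"
    using assms by (simp add: power_divide field_simps)
  then obtain t where "a/r = cos t" "b/r = sin t"
    using sincos_total_2pi by metis
  then show ?thesis using that assms(1) by (auto simp: field_simps)
qed

text \<open>E33 B + B E33 - 2 B33 E33 is the part of B spanned by Q13 and Q23; a rotation about the
  z-axis turns it into a multiple of Q13, and Q13 Q13 = E11 + E33.\<close>

lemma rotz_E11_if_offblock_entry:
  assumes J: "jordan_subalgebra W" and E33: "E33 \<in> W" and B: "B \<in> W" "B$1$3 \<noteq> 0 \<or> B$2$3 \<noteq> 0"
  obtains t where "E11 \<in> act2 (transpose (rotz t)) ` W"
proof -
  note sub = jordan_subalgebra_subspace[OF J]
  define r where "r = sqrt ((B$1$3)^2 + (B$2$3)^2)"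
  have pos: "(B$1$3)^2 + (B$2$3)^2 > 0"
    using B(2) by (simp add: sum_power2_gt_zero_iff)
  then have "r > 0" "(B$1$3)^2 + (B$2$3)^2 = r^2"
    unfolding r_def by simp_all
  then obtain t where t: "B$1$3 = r * cos t" "B$2$3 = r * sin t"
    using polar_coordinates by metis
  let ?g = "transpose (rotz t)"
  have J': "jordan_subalgebra (act2 ?g ` W)"
    by (rule jordan_subalgebra_act2_image[OF J SO3_transpose[OF SO3_rotz]])
  have "E33 ** B + B ** E33 - (2 * B$3$3) *\<^sub>R E33 \<in> W"
    by (rule subspace_diff[OF sub jordan_subalgebra_product[OF J E33 B(1)] subspace_scale[OF sub E33]])
  moreover have "act2 ?g (E33 ** B + B ** E33 - (2 * B$3$3) *\<^sub>R E33) = r *\<^sub>R Q13"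
    using t subsetD[OF jordan_subalgebra_Sym2[OF J] B(1)] unfolding Sym2_iff
    by (simp add: vec_eq_iff mat3_simps unit_defs algebra_simps sin_cos_squared_add_mult)
  ultimately have "r *\<^sub>R Q13 \<in> act2 ?g ` W"
    by (metis imageI)
  then have Q13: "Q13 \<in> act2 ?g ` W"
    using subspace_scaleR_cancel[OF jordan_subalgebra_subspace[OF J']] \<open>r > 0\<close> by simp
  have "Q13 ** Q13 - E33 \<in> act2 ?g ` W"
    using imageI[OF E33, of "act2 ?g"] jordan_subalgebra_square[OF J' Q13]
    by (simp add: act2_transpose_rotz_E33 subspace_diff[OF jordan_subalgebra_subspace[OF J']])
  moreover have "Q13 ** Q13 - E33 = E11"
    by (simp add: vec_eq_iff mat3_simps unit_defs)
  ultimately show ?thesis using that by simp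
qed

lemma act2_rotz_block_entries:
  fixes t :: real
  assumes "A \<in> Sym2" "A$1$3 = 0" "A$2$3 = 0"
  defines "A' \<equiv> act2 (transpose (rotz t)) A"
  shows "A'$1$1 = cos t * cos t * A$1$1 + 2 * cos t * sin t * A$1$2 + sin t * sin t * A$2$2"
    and "A'$2$2 = sin t * sin t * A$1$1 - 2 * cos t * sin t * A$1$2 + cos t * cos t * A$2$2"
    and "A'$1$2 = (cos t * cos t - sin t * sin t) * A$1$2 - cos t * sin t * (A$1$1 - A$2$2)"
    and "A'$1$3 = 0" "A'$2$3 = 0" "A'$3$3 = A$3$3"
  using assms unfolding Sym2_iff by (simp_all add: mat3_simps algebra_simps)

text \<open>Rotating by half the polar angle of (A11 - A22, 2 A12) diagonalises the upper 2x2 block.\<close>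

lemma rotz_diagonalizes_block:
  assumes A: "A \<in> Sym2" "A$1$3 = 0" "A$2$3 = 0"
  obtains t where "act2 (transpose (rotz t)) A \<in> diagonal_mats"
    and "A$1$1 \<noteq> A$2$2 \<or> A$1$2 \<noteq> 0 \<Longrightarrow>
      act2 (transpose (rotz t)) A $1$1 \<noteq> act2 (transpose (rotz t)) A $2$2"
proof (cases "A$1$1 = A$2$2 \<and> A$1$2 = 0")
  case True
  then show ?thesis
    using that[of 0] act2_rotz_block_entries[OF A, of 0] act2_Sym2[OF A(1)]
    by (simp add: diagonal_mats_def)
next
  case False
  define a where "a = A$1$1 - A$2$2"
  define b where "b = A$1$2"
  define \<rho> where "\<rho> = sqrt (a^2 + (2*b)^2)"
  have pos: "a^2 + (2*b)^2 > 0"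
    using False unfolding a_def b_def by (subst sum_power2_gt_zero_iff) auto
  then have "\<rho> > 0" "a^2 + (2*b)^2 = \<rho>^2"
    unfolding \<rho>_def by simp_all
  then obtain p where p: "a = \<rho> * cos p" "2*b = \<rho> * sin p"
    using polar_coordinates by metis
  define t where "t = p / 2"
  have a: "a = \<rho> * (cos t * cos t - sin t * sin t)"
    using p(1) unfolding t_def cos_double[of "p/2", simplified] by (simp add: power2_eq_square)
  have b: "b = \<rho> * (sin t * cos t)"
    using p(2) unfolding t_def sin_double[of "p/2", simplified] by simp
  have offdiagonal: "(cos t * cos t - sin t * sin t) * b - cos t * sin t * a = 0"
    unfolding a b by (simp add: algebra_simps)
  have "(cos t * cos t * A$1$1 + 2 * cos t * sin t * A$1$2 + sin t * sin t * A$2$2)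
      - (sin t * sin t * A$1$1 - 2 * cos t * sin t * A$1$2 + cos t * cos t * A$2$2)
      = (cos t * cos t - sin t * sin t) * a + 4 * cos t * sin t * b"
    unfolding a_def b_def by (simp add: algebra_simps)
  also have "\<dots> = \<rho> * (cos t * cos t + sin t * sin t) * (cos t * cos t + sin t * sin t)"
    unfolding a b by algebra
  also have "\<dots> = \<rho>" by (simp only: sin_cos_squared_add3 mult_1_right)
  finally have diagonal_gap: "(cos t * cos t * A$1$1 + 2 * cos t * sin t * A$1$2 + sin t * sin t * A$2$2)
      - (sin t * sin t * A$1$1 - 2 * cos t * sin t * A$1$2 + cos t * cos t * A$2$2) = \<rho>" .
  show ?thesis
    using that[of t] act2_rotz_block_entries[OF A, of t] act2_Sym2[OF A(1)] offdiagonal diagonal_gap \<open>\<rho> > 0\<close>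
    unfolding a_def b_def by (auto simp: diagonal_mats_def)
qed

lemma E11_if_diagonal_gap:
  assumes J: "jordan_subalgebra W" and "E33 \<in> W" "D \<in> W" "D \<in> diagonal_mats" "D$1$1 \<noteq> D$2$2"
  shows "E11 \<in> W"
proof -
  note sub = jordan_subalgebra_subspace[OF J]
  have "D - D$2$2 *\<^sub>R mat 1 - (D$3$3 - D$2$2) *\<^sub>R E33 \<in> W"
    using assms jordan_subalgebra_mat1[OF J]
    by (intro subspace_diff[OF sub] subspace_scale[OF sub]) auto
  moreover have "D - D$2$2 *\<^sub>R mat 1 - (D$3$3 - D$2$2) *\<^sub>R E33 = (D$1$1 - D$2$2) *\<^sub>R E11"
    using assms(4) unfolding diagonal_mats_def Sym2_iff by (simp add: vec_eq_iff mat3_simps unit_defs)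
  ultimately show ?thesis
    using subspace_scaleR_cancel[OF sub] assms(5) by auto
qed

lemma rotz_E11_if_nonscalar_block:
  assumes J: "jordan_subalgebra W" and E33: "E33 \<in> W"
    and B: "B \<in> W" "B$1$3 = 0" "B$2$3 = 0" "B$1$2 \<noteq> 0 \<or> B$1$1 \<noteq> B$2$2"
  obtains t where "E11 \<in> act2 (transpose (rotz t)) ` W"
proof -
  obtain t where t: "act2 (transpose (rotz t)) B \<in> diagonal_mats"
      "act2 (transpose (rotz t)) B $1$1 \<noteq> act2 (transpose (rotz t)) B $2$2"
    using rotz_diagonalizes_block[OF subsetD[OF jordan_subalgebra_Sym2[OF J] B(1)] B(2,3)] B(4) by metis
  let ?g = "transpose (rotz t)"
  have "E11 \<in> act2 ?g ` W"
    using E11_if_diagonal_gap[OF jordan_subalgebra_act2_image[OF J SO3_transpose[OF SO3_rotz]] _ _ t]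
      imageI[OF E33, of "act2 ?g"] imageI[OF B(1), of "act2 ?g"]
    by (simp add: act2_transpose_rotz_E33)
  then show ?thesis by (rule that)
qed

lemma normal_form_if_E33:
  assumes J: "jordan_subalgebra W" and E33: "E33 \<in> W"
  shows "rotated_normal_form W"
proof -
  consider (offblock) B where "B \<in> W" "B$1$3 \<noteq> 0 \<or> B$2$3 \<noteq> 0"
    | (block) B where "B \<in> W" "B$1$3 = 0" "B$2$3 = 0" "B$1$2 \<noteq> 0 \<or> B$1$1 \<noteq> B$2$2"
    | (axial) "\<forall>B\<in>W. B$1$3 = 0 \<and> B$2$3 = 0 \<and> B$1$2 = 0 \<and> B$1$1 = B$2$2"
    by blast
  then show ?thesis
  proof cases
    case offblock
    then show ?thesis
      using rotz_E11_if_offblock_entry[OF J E33] normal_form_if_rotz_E11[OF J E33] by metis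
  next
    case block
    then show ?thesis
      using rotz_E11_if_nonscalar_block[OF J E33] normal_form_if_rotz_E11[OF J E33] by metis
  next
    case axial
    have "A \<in> W" if A: "A \<in> axial_mats" for A
    proof -
      have "A$1$1 *\<^sub>R (mat 1 - E33) + A$3$3 *\<^sub>R E33 \<in> W"
        using E33 jordan_subalgebra_mat1[OF J] jordan_subalgebra_subspace[OF J]
        by (intro subspace_add subspace_scale subspace_diff)
      moreover have "A$1$1 *\<^sub>R (mat 1 - E33) + A$3$3 *\<^sub>R E33 = A"
        using A unfolding axial_mats_def Sym2_iff by (simp add: vec_eq_iff mat3_simps unit_defs)
      ultimately show ?thesis by simp
    qed
    moreover have "W \<subseteq> axial_mats"
      using axial jordan_subalgebra_Sym2[OF J] unfolding axial_mats_def by auto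
    ultimately have "W = axial_mats" by blast
    then show ?thesis by (simp add: rotated_normal_form_normal_forms normal_forms_def)
  qed
qed

lemma normal_form_if_proj:
  assumes J: "jordan_subalgebra W" and u: "norm u = 1" and proj: "proj u \<in> W"
  shows "rotated_normal_form W"
proof -
  obtain r where r: "r \<in> SO3" "r *v axis 3 1 = u"
    using SO3_maps_axis3[OF u] by blast
  let ?g = "transpose r"
  have g: "?g \<in> SO3" by (rule SO3_transpose[OF r(1)])
  have "?g *v u = axis 3 1"
    unfolding r(2)[symmetric] matrix_vector_mul_assoc SO3_transpose_mult[OF r(1)] by simp
  then have "act2 ?g (proj u) = proj (axis 3 1)"
    by (simp add: act2_proj)
  also have "proj (axis 3 1) = E33"
    by (simp add: units_eq_proj_axis)
  finally have "act2 ?g (proj u) = E33" .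
  then have "E33 \<in> act2 ?g ` W"
    using imageI[OF proj, of "act2 ?g"] by simp
  then have "rotated_normal_form (act2 ?g ` W)"
    by (rule normal_form_if_E33[OF jordan_subalgebra_act2_image[OF J g]])
  then show ?thesis by (rule rotated_normal_form_act2_image[OF g])
qed

text \<open>These are (D - d_j)(D - d_k), which kill every diagonal entry but d_i.\<close>

lemma diagonal_quadratic_proj:
  assumes "D \<in> diagonal_mats"
  shows "D ** D - (D$2$2 + D$3$3) *\<^sub>R D + (D$2$2 * D$3$3) *\<^sub>R mat 1
      = ((D$1$1 - D$2$2) * (D$1$1 - D$3$3)) *\<^sub>R proj (axis 1 1)"
    and "D ** D - (D$1$1 + D$3$3) *\<^sub>R D + (D$1$1 * D$3$3) *\<^sub>R mat 1
      = ((D$2$2 - D$1$1) * (D$2$2 - D$3$3)) *\<^sub>R proj (axis 2 1)"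
    and "D ** D - (D$1$1 + D$2$2) *\<^sub>R D + (D$1$1 * D$2$2) *\<^sub>R mat 1
      = ((D$3$3 - D$1$1) * (D$3$3 - D$2$2)) *\<^sub>R proj (axis 3 1)"
  using assms unfolding diagonal_mats_def Sym2_iff
  by (simp_all add: vec_eq_iff mat3_simps proj_def axis_def algebra_simps)

lemma proj_if_isolated_diagonal_entry:
  assumes J: "jordan_subalgebra W" and D: "D \<in> W"
    and "D ** D - (b + c) *\<^sub>R D + (b * c) *\<^sub>R mat 1 = ((a - b) * (a - c)) *\<^sub>R P"
    and "a \<noteq> b" "a \<noteq> c"
  shows "P \<in> W"
proof -
  note sub = jordan_subalgebra_subspace[OF J]
  have "D ** D - (b + c) *\<^sub>R D + (b * c) *\<^sub>R mat 1 \<in> W"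
    using jordan_subalgebra_square[OF J D] D jordan_subalgebra_mat1[OF J]
    by (intro subspace_add[OF sub] subspace_diff[OF sub] subspace_scale[OF sub])
  then show ?thesis
    using assms(3-5) subspace_scaleR_cancel[OF sub] by simp
qed

lemma normal_form_if_nonscalar_diagonal:
  assumes J: "jordan_subalgebra W" and D: "D \<in> W" "D \<in> diagonal_mats"
    and nonscalar: "\<not> (D$1$1 = D$2$2 \<and> D$2$2 = D$3$3)"
  shows "rotated_normal_form W"
proof -
  note isolate = proj_if_isolated_diagonal_entry[OF J D(1)]
  consider "D$1$1 \<noteq> D$2$2" "D$1$1 \<noteq> D$3$3" | "D$2$2 \<noteq> D$1$1" "D$2$2 \<noteq> D$3$3"
    | "D$3$3 \<noteq> D$1$1" "D$3$3 \<noteq> D$2$2"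
    using nonscalar by argo
  then show ?thesis
  proof cases
    case 1
    then show ?thesis
      using normal_form_if_proj[OF J norm_axis_1 isolate[OF diagonal_quadratic_proj(1)[OF D(2)]]] by simp
  next
    case 2
    then show ?thesis
      using normal_form_if_proj[OF J norm_axis_1 isolate[OF diagonal_quadratic_proj(2)[OF D(2)]]] by simp
  next
    case 3
    then show ?thesis
      using normal_form_if_proj[OF J norm_axis_1 isolate[OF diagonal_quadratic_proj(3)[OF D(2)]]] by simp
  qed
qed

lemma cubic_has_real_root:
  fixes a b c :: real
  obtains t where "c + b * t + a * t^2 - t^3 = 0"
proof -
  define f where "f t = c + b * t + a * t^2 - t^3" for t :: real
  define M where "M = 1 + \<bar>a\<bar> + \<bar>b\<bar> + \<bar>c\<bar>"
  have M1: "M \<ge> 1" unfolding M_def by simp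
  have MM: "M \<le> M * M" using M1 by (simp add: mult_le_cancel_left1)
  have M2: "1 \<le> M * M" using M1 MM by linarith
  have "b * M \<le> \<bar>b\<bar> * M" "- b * M \<le> \<bar>b\<bar> * M"
    using mult_right_mono[of b "\<bar>b\<bar>" M] mult_right_mono[of "-b" "\<bar>b\<bar>" M] M1 by simp_all
  moreover have "\<bar>b\<bar> * M \<le> \<bar>b\<bar> * (M * M)"
    using MM by (simp add: mult_left_mono)
  ultimately have b_bound: "b * M \<le> \<bar>b\<bar> * (M * M)" "- b * M \<le> \<bar>b\<bar> * (M * M)"
    by linarith+
  have c_bound: "c \<le> \<bar>c\<bar> * (M * M)" "- c \<le> \<bar>c\<bar> * (M * M)"
    using M2 by (smt (verit) mult_le_cancel_left1)+
  have a_bound: "a * (M * M) \<le> \<bar>a\<bar> * (M * M)" "- a * (M * M) \<le> \<bar>a\<bar> * (M * M)"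
    using mult_right_mono[of a "\<bar>a\<bar>" "M * M"] mult_right_mono[of "-a" "\<bar>a\<bar>" "M * M"] M2 by simp_all
  have "f M = c + b * M + a * (M * M) - M * (M * M)"
    unfolding f_def by (simp add: power2_eq_square power3_eq_cube)
  also have "\<dots> \<le> (\<bar>a\<bar> + \<bar>b\<bar> + \<bar>c\<bar> - M) * (M * M)"
    using a_bound b_bound c_bound by (simp add: algebra_simps)
  also have "\<dots> = - (M * M)" unfolding M_def by (simp add: algebra_simps)
  finally have "f M \<le> 0" using M2 by linarith
  have "- f (- M) = - c + b * M - a * (M * M) - M * (M * M)"
    unfolding f_def by (simp add: power2_eq_square power3_eq_cube)
  also have "\<dots> \<le> (\<bar>a\<bar> + \<bar>b\<bar> + \<bar>c\<bar> - M) * (M * M)"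
    using a_bound b_bound c_bound by (simp add: algebra_simps)
  also have "\<dots> = - (M * M)" unfolding M_def by (simp add: algebra_simps)
  finally have "0 \<le> f (- M)" using M2 by linarith
  moreover have "continuous_on {-M..M} f"
    unfolding f_def by (intro continuous_intros)
  ultimately obtain t where "f t = 0"
    using IVT2'[of f M 0 "-M"] \<open>f M \<le> 0\<close> M1 by auto
  then show ?thesis using that unfolding f_def by blast
qed

lemma det_sub_scaleR_mat1_3:
  fixes A :: mat3
  shows "det (A - t *\<^sub>R mat 1) = det A
     + - (A$1$1 * A$2$2 + A$1$1 * A$3$3 + A$2$2 * A$3$3 - A$1$2 * A$2$1 - A$1$3 * A$3$1 - A$2$3 * A$3$2) * t
     + (A$1$1 + A$2$2 + A$3$3) * t^2 - t^3"
  by (simp add: det_3 mat3_simps algebra_simps power2_eq_square power3_eq_cube)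

lemma real_eigenvector_3:
  fixes A :: mat3
  obtains l u where "norm u = 1" "A *v u = l *\<^sub>R u"
proof -
  obtain l where l: "det (A - l *\<^sub>R mat 1) = 0"
    unfolding det_sub_scaleR_mat1_3 by (rule cubic_has_real_root)
  have "\<not> (\<forall>x. (A - l *\<^sub>R mat 1) *v x = 0 \<longrightarrow> x = 0)"
  proof
    assume "\<forall>x. (A - l *\<^sub>R mat 1) *v x = 0 \<longrightarrow> x = 0"
    then obtain B where "B ** (A - l *\<^sub>R mat 1) = mat 1"
      using matrix_left_invertible_ker by blast
    then have "invertible (A - l *\<^sub>R mat 1)"
      unfolding invertible_def using matrix_left_right_inverse by blast
    then show False using l invertible_det_nz by blast
  qed
  then obtain x where x: "(A - l *\<^sub>R mat 1) *v x = 0" "x \<noteq> 0" by blast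
  have "A *v x = l *\<^sub>R x"
    using x(1) by (simp add: vec_eq_iff mat3_simps algebra_simps)
  then have "A *v sgn x = l *\<^sub>R sgn x"
    by (simp add: sgn_div_norm matrix_vector_mult_scaleR)
  moreover have "norm (sgn x) = 1"
    using x(2) by (simp add: norm_sgn)
  ultimately show ?thesis using that by blast
qed

lemma Sym2_diagonalizable:
  assumes A: "A \<in> Sym2"
  obtains h where "h \<in> SO3" "act2 (transpose h) A \<in> diagonal_mats"
proof -
  obtain l u where u: "norm u = 1" "A *v u = l *\<^sub>R u"
    using real_eigenvector_3 by blast
  obtain r where r: "r \<in> SO3" "r *v axis 3 1 = u"
    using SO3_maps_axis3[OF u(1)] by blast
  define A' where "A' = act2 (transpose r) A"
  have A'_Sym2: "A' \<in> Sym2"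
    unfolding A'_def by (rule act2_Sym2[OF A])
  have "A' *v axis 3 1 = transpose r *v (A *v (r *v axis 3 1))"
    unfolding A'_def act2_def by (simp add: matrix_vector_mul_assoc matrix_mul_assoc)
  also have "\<dots> = transpose r *v (l *\<^sub>R (r *v axis 3 1))"
    using r(2) u(2) by simp
  also have "\<dots> = l *\<^sub>R axis 3 1"
    by (simp add: matrix_vector_mult_scaleR matrix_vector_mul_assoc SO3_transpose_mult[OF r(1)])
  finally have "A'$1$3 = 0" "A'$2$3 = 0"
    by (simp_all add: vec_eq_iff mat3_simps axis_def)
  then obtain t where t: "act2 (transpose (rotz t)) A' \<in> diagonal_mats"
    using rotz_diagonalizes_block[OF A'_Sym2] by metis
  have "act2 (transpose (r ** rotz t)) A = act2 (transpose (rotz t)) A'"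
    unfolding A'_def by (simp add: matrix_transpose_mul act2_mult)
  then show ?thesis
    using that[of "r ** rotz t"] t SO3_mult[OF r(1) SO3_rotz] by simp
qed

lemma jordan_subalgebra_normal_form:
  assumes J: "jordan_subalgebra W"
  shows "rotated_normal_form W"
proof (cases "W \<subseteq> scalar_mats")
  case True
  have "scalar_mats \<subseteq> W"
    using jordan_subalgebra_mat1[OF J] subspace_scale[OF jordan_subalgebra_subspace[OF J]]
    by (auto simp: scalar_mats_def)
  then have "W = scalar_mats" using True by blast
  then show ?thesis by (simp add: rotated_normal_form_normal_forms normal_forms_def)
next
  case False
  then obtain A where A: "A \<in> W" "A \<notin> scalar_mats" by blast
  obtain h where h: "h \<in> SO3" "act2 (transpose h) A \<in> diagonal_mats"
    using Sym2_diagonalizable subsetD[OF jordan_subalgebra_Sym2[OF J] A(1)] by metis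
  define D where "D = act2 (transpose h) A"
  have g: "transpose h \<in> SO3" by (rule SO3_transpose[OF h(1)])
  have nonscalar: "\<not> (D$1$1 = D$2$2 \<and> D$2$2 = D$3$3)"
  proof
    assume "D$1$1 = D$2$2 \<and> D$2$2 = D$3$3"
    then have "D = D$1$1 *\<^sub>R mat 1"
      using h(2) unfolding D_def[symmetric] diagonal_mats_def Sym2_iff by (simp add: vec_eq_iff mat3_simps)
    then obtain c where c: "D = c *\<^sub>R mat 1" by blast
    have "A = act2 h D"
      using act2_act2_transpose[OF h(1), of A] by (simp add: D_def)
    also have "\<dots> = c *\<^sub>R mat 1"
      by (simp add: c act2_scaleR act2_mat1[OF h(1)])
    finally show False using A(2) by (auto simp: scalar_mats_def)
  qed
  have "rotated_normal_form (act2 (transpose h) ` W)"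
    using normal_form_if_nonscalar_diagonal[OF jordan_subalgebra_act2_image[OF J g] _ _ nonscalar]
      A(1) h(2) by (simp add: D_def)
  then show ?thesis by (rule rotated_normal_form_act2_image[OF g])
qed

section \<open>Dimensions of the normal forms\<close>

lemma independent_if_distinguishing_entries:
  fixes B :: "(real^'n^'m) set"
  assumes "\<And>b. b \<in> B \<Longrightarrow> \<exists>i j. b$i$j \<noteq> 0 \<and> (\<forall>b'\<in>B. b' \<noteq> b \<longrightarrow> b'$i$j = 0)"
  shows "independent B"
  unfolding dependent_def
proof
  assume "\<exists>a\<in>B. a \<in> span (B - {a})"
  then obtain a where a: "a \<in> B" "a \<in> span (B - {a})" by blast
  obtain i j where ij: "a$i$j \<noteq> 0" "\<forall>b'\<in>B. b' \<noteq> a \<longrightarrow> b'$i$j = 0"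
    using assms[OF a(1)] by blast
  have "subspace {A::real^'n^'m. A$i$j = 0}"
    by (simp add: subspace_def)
  then have "span (B - {a}) \<subseteq> {A. A$i$j = 0}"
    by (rule span_minimal[rotated]) (use ij in auto)
  then show False using a(2) ij(1) by auto
qed

lemma independent_units:
  assumes "B \<subseteq> {E11, E22, E33, Q12, Q13, Q23}"
  shows "independent B"
proof (rule independent_if_distinguishing_entries)
  fix b assume "b \<in> B"
  then consider "b = E11" | "b = E22" | "b = E33" | "b = Q12" | "b = Q13" | "b = Q23"
    using assms by blast
  then show "\<exists>i j. b$i$j \<noteq> 0 \<and> (\<forall>b'\<in>B. b' \<noteq> b \<longrightarrow> b'$i$j = 0)"
  proof cases
    case 1 then show ?thesis using assms by (intro exI[of _ 1] exI[of _ 1]) (auto simp: unit_defs)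
  next
    case 2 then show ?thesis using assms by (intro exI[of _ 2] exI[of _ 2]) (auto simp: unit_defs)
  next
    case 3 then show ?thesis using assms by (intro exI[of _ 3] exI[of _ 3]) (auto simp: unit_defs)
  next
    case 4 then show ?thesis using assms by (intro exI[of _ 1] exI[of _ 2]) (auto simp: unit_defs)
  next
    case 5 then show ?thesis using assms by (intro exI[of _ 1] exI[of _ 3]) (auto simp: unit_defs)
  next
    case 6 then show ?thesis using assms by (intro exI[of _ 2] exI[of _ 3]) (auto simp: unit_defs)
  qed
qed

lemma units_distinct:
  "E11 \<noteq> E22" "E11 \<noteq> E33" "E22 \<noteq> E33" "E11 \<noteq> Q12" "E22 \<noteq> Q12" "E33 \<noteq> Q12"
  "E11 \<noteq> Q13" "E22 \<noteq> Q13" "E33 \<noteq> Q13" "E11 \<noteq> Q23" "E22 \<noteq> Q23" "E33 \<noteq> Q23"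
  "Q12 \<noteq> Q13" "Q12 \<noteq> Q23" "Q13 \<noteq> Q23"
  by (simp_all add: unit_defs vec_eq_iff forall_3)

lemma dim_scalar_mats: "dim scalar_mats = 1"
proof (rule dim_unique[of "{mat 1}"])
  show "{mat 1} \<subseteq> scalar_mats"
    unfolding scalar_mats_def using rangeI[of "\<lambda>c. c *\<^sub>R mat 1" 1] by simp
  show "scalar_mats \<subseteq> span {mat 1}"
    unfolding scalar_mats_def by (auto intro: span_scale span_base)
  show "independent {mat 1::mat3}"
    by (rule independent_if_distinguishing_entries) (auto intro!: exI[of _ 1] simp: mat_def)
qed simp

lemma dim_axial_mats: "dim axial_mats = 2"
proof (rule dim_unique[of "{mat 1 - E33, E33}"])
  show "{mat 1 - E33, E33} \<subseteq> axial_mats"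
    unfolding axial_mats_def Sym2_iff by (simp add: unit_defs mat_def)
  show "axial_mats \<subseteq> span {mat 1 - E33, E33}"
  proof
    fix A assume "A \<in> axial_mats"
    then have "A = A$1$1 *\<^sub>R (mat 1 - E33) + A$3$3 *\<^sub>R E33"
      unfolding axial_mats_def Sym2_iff by (simp add: vec_eq_iff mat3_simps unit_defs)
    also have "\<dots> \<in> span {mat 1 - E33, E33}"
      by (intro span_add span_scale span_base) auto
    finally show "A \<in> span {mat 1 - E33, E33}" .
  qed
  have distinct: "mat 1 - E33 \<noteq> E33"
    by (simp add: unit_defs vec_eq_iff forall_3 mat_def)
  show "independent {mat 1 - E33, E33}"
  proof (rule independent_if_distinguishing_entries)
    fix b assume "b \<in> {mat 1 - E33, E33}"
    then consider "b = mat 1 - E33" | "b = E33" by blast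
    then show "\<exists>i j. b$i$j \<noteq> 0 \<and> (\<forall>b'\<in>{mat 1 - E33, E33}. b' \<noteq> b \<longrightarrow> b'$i$j = 0)"
    proof cases
      case 1 then show ?thesis by (intro exI[of _ 1] exI[of _ 1]) (simp add: unit_defs mat_def)
    next
      case 2 then show ?thesis by (intro exI[of _ 3] exI[of _ 3]) (simp add: unit_defs mat_def)
    qed
  qed
  show "card {mat 1 - E33, E33} = 2"
    using distinct by simp
qed

lemma dim_diagonal_mats: "dim diagonal_mats = 3"
proof (rule dim_unique[of "{E11, E22, E33}"])
  show "{E11, E22, E33} \<subseteq> diagonal_mats"
    unfolding diagonal_mats_def Sym2_iff by (simp add: unit_defs)
  show "diagonal_mats \<subseteq> span {E11, E22, E33}"
  proof
    fix A assume "A \<in> diagonal_mats"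
    then have "A = A$1$1 *\<^sub>R E11 + A$2$2 *\<^sub>R E22 + A$3$3 *\<^sub>R E33"
      unfolding diagonal_mats_def Sym2_iff by (simp add: vec_eq_iff mat3_simps unit_defs)
    also have "\<dots> \<in> span {E11, E22, E33}"
      by (intro span_add span_scale span_base) auto
    finally show "A \<in> span {E11, E22, E33}" .
  qed
  show "independent {E11, E22, E33}"
    by (rule independent_units) auto
  show "card {E11, E22, E33} = 3"
    using units_distinct by simp
qed

lemma dim_block_mats: "dim block_mats = 4"
proof (rule dim_unique[of "{E11, E22, E33, Q12}"])
  show "{E11, E22, E33, Q12} \<subseteq> block_mats"
    unfolding block_mats_def Sym2_iff by (simp add: unit_defs)
  show "block_mats \<subseteq> span {E11, E22, E33, Q12}"
  proof
    fix A assume "A \<in> block_mats"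
    then have "A = A$1$1 *\<^sub>R E11 + A$2$2 *\<^sub>R E22 + A$3$3 *\<^sub>R E33 + A$1$2 *\<^sub>R Q12"
      unfolding block_mats_def Sym2_iff by (simp add: vec_eq_iff mat3_simps unit_defs)
    also have "\<dots> \<in> span {E11, E22, E33, Q12}"
      by (intro span_add span_scale span_base) auto
    finally show "A \<in> span {E11, E22, E33, Q12}" .
  qed
  show "independent {E11, E22, E33, Q12}"
    by (rule independent_units) auto
  show "card {E11, E22, E33, Q12} = 4"
    using units_distinct by simp
qed

lemma dim_Sym2: "dim Sym2 = 6"
proof (rule dim_unique[of "{E11, E22, E33, Q12, Q13, Q23}"])
  show "{E11, E22, E33, Q12, Q13, Q23} \<subseteq> Sym2"
    by (simp add: Sym2_iff unit_defs)
  show "Sym2 \<subseteq> span {E11, E22, E33, Q12, Q13, Q23}"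
  proof
    fix A assume A: "A \<in> Sym2"
    have "A$1$1 *\<^sub>R E11 + A$2$2 *\<^sub>R E22 + A$3$3 *\<^sub>R E33 + A$1$2 *\<^sub>R Q12 + A$1$3 *\<^sub>R Q13 + A$2$3 *\<^sub>R Q23
       \<in> span {E11, E22, E33, Q12, Q13, Q23}"
      by (intro span_add span_scale span_base) auto
    then show "A \<in> span {E11, E22, E33, Q12, Q13, Q23}"
      using Sym2_decomposition[OF A] by simp
  qed
  show "independent {E11, E22, E33, Q12, Q13, Q23}"
    by (rule independent_units) auto
  show "card {E11, E22, E33, Q12, Q13, Q23} = 6"
    using units_distinct by simp
qed

section \<open>Symmetry groups of the normal forms\<close>

lemma sym_groupD: "g \<in> sym_group S \<Longrightarrow> A \<in> S \<Longrightarrow> act2 g A = A"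
  unfolding sym_group_def by auto

lemma SO3_fixing_proj_axis:
  assumes g: "g \<in> SO3" and fixed: "act2 g (proj (axis k 1)) = proj (axis k 1)"
  shows "i \<noteq> k \<Longrightarrow> g$i$k = 0" and "i \<noteq> k \<Longrightarrow> g$k$i = 0" and "g$k$k = 1 \<or> g$k$k = -1"
proof -
  have column: "g$i$k * g$i$k = (if i = k then 1 else 0)" for i
    using arg_cong[OF fixed[unfolded act2_proj matrix_vector_mult_basis], of "\<lambda>M. M$i$i"]
    by (simp add: proj_def column_def axis_def)
  have "(\<Sum>j\<in>UNIV. g$k$j * g$k$j) = 1"
    using arg_cong[OF SO3_mult_transpose[OF g], of "\<lambda>M. M$k$k"]
    by (simp add: matrix_matrix_mult_def transpose_def mat_def)
  then have "(\<Sum>j\<in>UNIV - {k}. g$k$j * g$k$j) = 0"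
    using column[of k] by (simp add: sum.remove[of UNIV k])
  then have "\<forall>j\<in>UNIV - {k}. g$k$j * g$k$j = 0"
    by (simp add: sum_nonneg_eq_0_iff)
  then show "i \<noteq> k \<Longrightarrow> g$k$i = 0" by simp
  show "i \<noteq> k \<Longrightarrow> g$i$k = 0" using column[of i] by simp
  show "g$k$k = 1 \<or> g$k$k = -1" using column[of k] by (simp add: square_eq_1_iff)
qed

lemma SO3_fixing_diagonal_units:
  assumes g: "g \<in> SO3" and fixed: "act2 g E11 = E11" "act2 g E22 = E22" "act2 g E33 = E33"
  obtains a b c where "g = diag3 a b c" "a * a = 1" "b * b = 1" "c * c = 1" "a * b * c = 1"
proof -
  note fixed_axes = SO3_fixing_proj_axis[OF g fixed(1)[unfolded units_eq_proj_axis]]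
    SO3_fixing_proj_axis[OF g fixed(2)[unfolded units_eq_proj_axis]]
    SO3_fixing_proj_axis[OF g fixed(3)[unfolded units_eq_proj_axis]]
  have diagonal: "g = diag3 (g$1$1) (g$2$2) (g$3$3)"
    using fixed_axes by (simp add: vec_eq_iff forall_3 diag3_def)
  moreover have "g$1$1 * g$2$2 * g$3$3 = 1"
    using g unfolding SO3_def by (subst (asm) diagonal) (simp add: det_3 diag3_def)
  ultimately show ?thesis
    using that fixed_axes(3,6,9) by auto
qed

lemma act2_diag3: "act2 (diag3 a b c) A = (\<chi> i j. vector [a, b, c] $ i * vector [a, b, c] $ j * A$i$j)"
  by (simp add: vec_eq_iff mat3_simps algebra_simps)

lemma act2_diag3_offdiagonal_units:
  "act2 (diag3 a b c) Q12 = (a * b) *\<^sub>R Q12" "act2 (diag3 a b c) Q13 = (a * c) *\<^sub>R Q13"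
  by (simp_all add: vec_eq_iff mat3_simps unit_defs)

lemma mat1_eq_diag3: "mat 1 = diag3 1 1 1"
  by (simp add: vec_eq_iff mat3_simps)

lemma scaleR_offdiagonal_unit_eq_iff: "c *\<^sub>R Q12 = Q12 \<longleftrightarrow> c = 1" "c *\<^sub>R Q13 = Q13 \<longleftrightarrow> c = 1"
  by (auto simp: vec_eq_iff forall_3 unit_defs)

lemma sym_group_scalar_mats: "sym_group scalar_mats = SO3"
  unfolding sym_group_def scalar_mats_def by (auto simp: act2_scaleR act2_mat1)

lemma SO3_fixing_E33:
  assumes "g \<in> SO3" "act2 g E33 = E33"
  shows "g$1$3 = 0" "g$2$3 = 0" "g$3$1 = 0" "g$3$2 = 0" "g$3$3 = 1 \<or> g$3$3 = -1"
  using SO3_fixing_proj_axis[OF assms(1) assms(2)[unfolded units_eq_proj_axis]] by simp_all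

lemma SO3_fixing_axis3_eq_rotz:
  assumes g: "g \<in> SO3" and "g$1$3 = 0" "g$2$3 = 0" "g$3$1 = 0" "g$3$2 = 0" "g$3$3 = 1"
  obtains t where "g = rotz t"
proof -
  have "g$1$1 * g$1$1 + g$2$1 * g$2$1 = 1" "g$1$1 * g$1$2 + g$2$1 * g$2$2 = 0"
    using arg_cong[OF SO3_transpose_mult[OF g], of "\<lambda>M. M$1$1"]
      arg_cong[OF SO3_transpose_mult[OF g], of "\<lambda>M. M$1$2"] assms(2-6)
    by (simp_all add: mat3_simps)
  moreover have "g$1$1 * g$2$2 - g$1$2 * g$2$1 = 1"
    using g assms(2-6) unfolding SO3_def by (simp add: det_3)
  moreover obtain t where t: "g$1$1 = cos t" "g$2$1 = sin t"
    using calculation(1) sincos_total_2pi[of "g$1$1" "g$2$1"] by (auto simp: power2_eq_square)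
  ultimately have "g$1$2 = - sin t" "g$2$2 = cos t"
    using sin_cos_squared_add3[of t] by algebra+
  then show ?thesis
    using that[of t] t assms(2-6) by (simp add: vec_eq_iff forall_3 rotz_def)
qed

lemma axial_mats_fixed:
  assumes "A \<in> axial_mats"
  shows "act2 (rotz t) A = A" and "act2 (diag3 1 (-1) (-1)) A = A"
  using assms unfolding axial_mats_def Sym2_iff
  by (auto simp: vec_eq_iff mat3_simps algebra_simps sin_cos_squared_add_mult)

lemma sym_group_axial_mats: "sym_group axial_mats = O2"
proof
  have "rotz t \<in> sym_group axial_mats" for t
    using SO3_rotz axial_mats_fixed(1) by (simp add: sym_group_def)
  moreover have "rotz t ** diag3 1 (-1) (-1) \<in> sym_group axial_mats" for t
    using SO3_mult[OF SO3_rotz SO3_diag3[of 1 "-1" "-1"]] axial_mats_fixed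
    by (simp add: sym_group_def act2_mult)
  ultimately show "O2 \<subseteq> sym_group axial_mats"
    unfolding O2_def by blast
  show "sym_group axial_mats \<subseteq> O2"
  proof
    fix g assume g: "g \<in> sym_group axial_mats"
    have g_SO3: "g \<in> SO3" using g unfolding sym_group_def by auto
    have "E33 \<in> axial_mats" unfolding axial_mats_def Sym2_iff by (simp add: unit_defs)
    note E33_fixed = SO3_fixing_E33[OF g_SO3 sym_groupD[OF g this]]
    show "g \<in> O2"
    proof (cases "g$3$3 = 1")
      case True
      then obtain t where "g = rotz t"
        using SO3_fixing_axis3_eq_rotz[OF g_SO3 E33_fixed(1-4)] by blast
      then show ?thesis unfolding O2_def by blast
    next
      case False
      let ?flip = "diag3 1 (-1) (-1)"
      have "g ** ?flip \<in> SO3" by (rule SO3_mult[OF g_SO3 SO3_diag3]) simp_all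
      moreover have "(g ** ?flip)$1$3 = 0" "(g ** ?flip)$2$3 = 0" "(g ** ?flip)$3$1 = 0"
        "(g ** ?flip)$3$2 = 0" "(g ** ?flip)$3$3 = 1"
        using E33_fixed False by (simp_all add: mat3_simps)
      ultimately obtain t where t: "g ** ?flip = rotz t"
        by (rule SO3_fixing_axis3_eq_rotz)
      have "?flip ** ?flip = mat 1" by (simp add: vec_eq_iff mat3_simps)
      then have "g = rotz t ** ?flip"
        unfolding t[symmetric] by (simp add: matrix_mul_assoc[symmetric])
      then show ?thesis unfolding O2_def by blast
    qed
  qed
qed

lemma diagonal_units_in_diagonal_mats: "E11 \<in> diagonal_mats" "E22 \<in> diagonal_mats" "E33 \<in> diagonal_mats"
  unfolding diagonal_mats_def Sym2_iff by (simp_all add: unit_defs)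

lemma sym_group_diag3_if_diagonal_mats:
  assumes "g \<in> sym_group S" "diagonal_mats \<subseteq> S"
  obtains a b c where "g = diag3 a b c" "a * a = 1" "b * b = 1" "c * c = 1" "a * b * c = 1"
proof -
  have g: "g \<in> SO3" using assms(1) by (simp add: sym_group_def)
  have "act2 g E11 = E11" "act2 g E22 = E22" "act2 g E33 = E33"
    using sym_groupD[OF assms(1)] subsetD[OF assms(2)] diagonal_units_in_diagonal_mats by blast+
  then show ?thesis by (rule SO3_fixing_diagonal_units[OF g _ _ _ that])
qed

lemma sym_group_diagonal_mats: "sym_group diagonal_mats = D2"
proof
  show "sym_group diagonal_mats \<subseteq> D2"
  proof
    fix g assume "g \<in> sym_group diagonal_mats"
    then obtain a b c where "g = diag3 a b c" "a * a = 1" "b * b = 1" "c * c = 1" "a * b * c = 1"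
      using sym_group_diag3_if_diagonal_mats by blast
    then show "g \<in> D2"
      unfolding D2_def mat1_eq_diag3 by (auto simp: square_eq_1_iff)
  qed
  show "D2 \<subseteq> sym_group diagonal_mats"
    unfolding D2_def mat1_eq_diag3 sym_group_def
    by (auto intro!: SO3_diag3 simp: act2_diag3 diagonal_mats_def Sym2_iff vec_eq_iff forall_3)
qed

lemma sym_group_block_mats: "sym_group block_mats = Z2"
proof
  show "sym_group block_mats \<subseteq> Z2"
  proof
    fix g assume g: "g \<in> sym_group block_mats"
    moreover have "diagonal_mats \<subseteq> block_mats"
      unfolding diagonal_mats_def block_mats_def by blast
    ultimately obtain a b c where abc: "g = diag3 a b c" "a * a = 1" "b * b = 1" "c * c = 1" "a * b * c = 1"
      by (rule sym_group_diag3_if_diagonal_mats)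
    have "Q12 \<in> block_mats" unfolding block_mats_def Sym2_iff by (simp add: unit_defs)
    then have "act2 g Q12 = Q12" by (rule sym_groupD[OF g])
    then have "a * b = 1"
      using abc(1) by (simp add: act2_diag3_offdiagonal_units scaleR_offdiagonal_unit_eq_iff)
    then show "g \<in> Z2"
      using abc unfolding Z2_def mat1_eq_diag3 by (auto simp: square_eq_1_iff)
  qed
  show "Z2 \<subseteq> sym_group block_mats"
    unfolding Z2_def mat1_eq_diag3 sym_group_def
    by (auto intro!: SO3_diag3 simp: act2_diag3 block_mats_def Sym2_iff vec_eq_iff forall_3)
qed

lemma sym_group_Sym2: "sym_group Sym2 = {mat 1}"
proof
  show "sym_group Sym2 \<subseteq> {mat 1}"
  proof
    fix g assume g: "g \<in> sym_group Sym2"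
    moreover have "diagonal_mats \<subseteq> Sym2"
      unfolding diagonal_mats_def by blast
    ultimately obtain a b c where abc: "g = diag3 a b c" "a * a = 1" "b * b = 1" "c * c = 1" "a * b * c = 1"
      by (rule sym_group_diag3_if_diagonal_mats)
    have "Q12 \<in> Sym2" "Q13 \<in> Sym2" unfolding Sym2_iff by (simp_all add: unit_defs)
    then have "act2 g Q12 = Q12" "act2 g Q13 = Q13" by (simp_all add: sym_groupD[OF g])
    then have "a * b = 1" "a * c = 1"
      using abc(1) by (simp_all add: act2_diag3_offdiagonal_units scaleR_offdiagonal_unit_eq_iff)
    then show "g \<in> {mat 1}"
      using abc unfolding mat1_eq_diag3 by (auto simp: square_eq_1_iff)
  qed
  show "{mat 1} \<subseteq> sym_group Sym2"
    unfolding sym_group_def using SO3_one by (auto simp: act2_one)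
qed

section \<open>Conjugacy of the symmetry groups\<close>

definition conjugate :: "mat3 \<Rightarrow> mat3 \<Rightarrow> mat3" where
  "conjugate h g = h ** g ** transpose h"

lemma has_sym_class_iff: "has_sym_class S H \<longleftrightarrow> (\<exists>h\<in>SO3. sym_group S = conjugate h ` H)"
  unfolding has_sym_class_def conjugate_def ..

lemma conjugate_transpose_conjugate: "h \<in> SO3 \<Longrightarrow> conjugate (transpose h) (conjugate h g) = g"
  unfolding conjugate_def
  by (simp add: matrix_mul_assoc SO3_transpose_mult) (simp add: matrix_mul_assoc[symmetric] SO3_transpose_mult)

lemma inj_conjugate: "h \<in> SO3 \<Longrightarrow> inj (conjugate h)"
  by (metis conjugate_transpose_conjugate injI)

lemma conjugate_conjugate: "conjugate a (conjugate b g) = conjugate (a ** b) g"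
  unfolding conjugate_def by (simp add: matrix_transpose_mul matrix_mul_assoc)

lemma conjugate_SO3: "h \<in> SO3 \<Longrightarrow> g \<in> SO3 \<Longrightarrow> conjugate h g \<in> SO3"
  unfolding conjugate_def by (intro SO3_mult SO3_transpose)

lemma conjugate_image_SO3:
  assumes h: "h \<in> SO3"
  shows "conjugate h ` SO3 = SO3"
proof
  show "conjugate h ` SO3 \<subseteq> SO3"
    using conjugate_SO3[OF h] by blast
  show "SO3 \<subseteq> conjugate h ` SO3"
  proof
    fix g assume g: "g \<in> SO3"
    have "g = conjugate h (conjugate (transpose h) g)"
      using conjugate_transpose_conjugate[OF SO3_transpose[OF h], of g] by simp
    then show "g \<in> conjugate h ` SO3"
      using conjugate_SO3[OF SO3_transpose[OF h] g] by blast
  qed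
qed

lemma sym_group_act2_image:
  assumes h: "h \<in> SO3"
  shows "sym_group (act2 h ` S) = conjugate h ` sym_group S"
proof
  show "sym_group (act2 h ` S) \<subseteq> conjugate h ` sym_group S"
  proof
    fix g assume g: "g \<in> sym_group (act2 h ` S)"
    then have g_SO3: "g \<in> SO3" and fixed: "\<And>A. A \<in> S \<Longrightarrow> act2 g (act2 h A) = act2 h A"
      unfolding sym_group_def by auto
    define k where "k = conjugate (transpose h) g"
    have "act2 k A = A" if "A \<in> S" for A
      unfolding k_def conjugate_def act2_mult using fixed[OF that] act2_transpose_act2[OF h] by simp
    then have "k \<in> sym_group S"
      using conjugate_SO3[OF SO3_transpose[OF h] g_SO3] unfolding sym_group_def k_def by auto
    moreover have "g = conjugate h k"
      unfolding k_def using conjugate_transpose_conjugate[OF SO3_transpose[OF h]] by simp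
    ultimately show "g \<in> conjugate h ` sym_group S" by blast
  qed
  show "conjugate h ` sym_group S \<subseteq> sym_group (act2 h ` S)"
  proof
    fix g assume "g \<in> conjugate h ` sym_group S"
    then obtain k where k: "k \<in> sym_group S" "g = conjugate h k" by blast
    have "act2 g (act2 h A) = act2 h A" if "A \<in> S" for A
      unfolding k(2) conjugate_def act2_mult using act2_transpose_act2[OF h] sym_groupD[OF k(1) that] by simp
    moreover have "g \<in> SO3"
      using k conjugate_SO3[OF h] unfolding sym_group_def by auto
    ultimately show "g \<in> sym_group (act2 h ` S)"
      unfolding sym_group_def by auto
  qed
qed

lemma infinite_O2: "infinite O2"
proof
  assume "finite O2"
  moreover have "rotz ` {0..pi} \<subseteq> O2" unfolding O2_def by auto
  ultimately have "finite (rotz ` {0..pi})" by (rule finite_subset[rotated])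
  moreover have "inj_on rotz {0..pi}"
  proof (rule inj_onI)
    fix x y assume "x \<in> {0..pi}" "y \<in> {0..pi}" "rotz x = rotz y"
    moreover have "cos x = rotz x $1$1" "cos y = rotz y $1$1" by (simp_all add: rotz_def)
    ultimately show "x = y" using cos_inj_pi by auto
  qed
  ultimately show False
    using finite_image_iff infinite_Icc[OF pi_gt_zero] by blast
qed

lemma O2_subset_SO3: "O2 \<subseteq> SO3"
  unfolding O2_def using SO3_rotz SO3_mult[OF SO3_rotz SO3_diag3[of 1 "-1" "-1"]] by auto

lemma infinite_SO3: "infinite SO3"
  using infinite_O2 O2_subset_SO3 infinite_super by blast

lemma SO3_neq_O2: "SO3 \<noteq> O2"
proof -
  have "g$3$3 = 1 \<or> g$3$3 = -1" if "g \<in> O2" for g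
    using that unfolding O2_def by (auto simp: mat3_simps)
  moreover have "quarter_turn_x $3$3 = 0"
    by (simp add: quarter_turn_x_def)
  ultimately show ?thesis
    using SO3_quarter_turn_x by force
qed

lemma finite_D2: "finite D2" and finite_Z2: "finite Z2"
  by (simp_all add: D2_def Z2_def)

lemma card_D2: "card D2 = 4" and card_Z2: "card Z2 = 2"
  by (simp_all add: D2_def Z2_def mat1_eq_diag3 vec_eq_iff diag3_def forall_3)

definition sym_classes :: "mat3 set set" where
  "sym_classes = {SO3, O2, D2, Z2, {mat 1}}"

lemma sym_classes_distinct:
  "SO3 \<noteq> O2" "SO3 \<noteq> D2" "SO3 \<noteq> Z2" "SO3 \<noteq> {mat 1}" "O2 \<noteq> D2" "O2 \<noteq> Z2"
  "O2 \<noteq> {mat 1}" "D2 \<noteq> Z2" "D2 \<noteq> {mat 1}" "Z2 \<noteq> {mat 1}"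
proof -
  show "SO3 \<noteq> O2" by (rule SO3_neq_O2)
  show "SO3 \<noteq> D2" "SO3 \<noteq> Z2" "SO3 \<noteq> {mat 1}" "O2 \<noteq> D2" "O2 \<noteq> Z2" "O2 \<noteq> {mat 1}"
    using infinite_SO3 infinite_O2 finite_D2 finite_Z2 by (metis finite.emptyI finite.insertI)+
  show "D2 \<noteq> Z2"
    using card_D2 card_Z2 by auto
  show "D2 \<noteq> {mat 1}"
  proof
    assume "D2 = {mat 1}"
    then have "card D2 = card {mat 1 :: mat3}" by (rule arg_cong)
    then show False using card_D2 by simp
  qed
  show "Z2 \<noteq> {mat 1}"
  proof
    assume "Z2 = {mat 1}"
    then have "card Z2 = card {mat 1 :: mat3}" by (rule arg_cong)
    then show False using card_Z2 by simp
  qed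
qed

text \<open>Conjugation preserves finiteness and cardinality, and fixes SO3; these invariants separate
  the five groups.\<close>

lemma conjugate_image_sym_classes:
  assumes H: "H \<in> sym_classes" and K: "K \<in> sym_classes" and g: "g \<in> SO3"
    and conj: "H = conjugate g ` K"
  shows "H = K"
proof -
  have finite: "finite H \<longleftrightarrow> finite K" and card: "card H = card K"
    using conj inj_conjugate[OF g] by (simp_all add: finite_image_iff card_image inj_on_subset)
  have "K = conjugate (transpose g) ` H"
    using conj conjugate_transpose_conjugate[OF g] by (simp add: image_image)
  then have not_SO3_O2: "\<not> (H = SO3 \<and> K = O2)" "\<not> (H = O2 \<and> K = SO3)"
    using conj conjugate_image_SO3[OF g] conjugate_image_SO3[OF SO3_transpose[OF g]] SO3_neq_O2 by auto
  from H K consider "H \<in> {SO3, O2}" "K \<in> {SO3, O2}" | "H \<in> {D2, Z2, {mat 1}}" "K \<in> {D2, Z2, {mat 1}}"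
    | "finite H \<noteq> finite K"
    unfolding sym_classes_def using infinite_SO3 infinite_O2 finite_D2 finite_Z2 by auto
  then show ?thesis
  proof cases
    case 1
    then show ?thesis using not_SO3_O2 by auto
  next
    case 2
    then show ?thesis using card card_D2 card_Z2 by auto
  next
    case 3
    then show ?thesis using finite by blast
  qed
qed

lemma has_sym_class_act2_image:
  assumes h: "h \<in> SO3" and S: "sym_group S \<in> sym_classes" and H: "H \<in> sym_classes"
  shows "has_sym_class (act2 h ` S) H \<longleftrightarrow> H = sym_group S"
proof
  assume "has_sym_class (act2 h ` S) H"
  then obtain k where k: "k \<in> SO3" "conjugate h ` sym_group S = conjugate k ` H"
    unfolding has_sym_class_iff sym_group_act2_image[OF h] by blast
  have "sym_group S = conjugate (transpose h) ` conjugate h ` sym_group S"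
    by (simp add: image_image conjugate_transpose_conjugate[OF h])
  also have "\<dots> = conjugate (transpose h ** k) ` H"
    by (simp add: k(2) image_image conjugate_conjugate)
  finally show "H = sym_group S"
    using conjugate_image_sym_classes[OF S H SO3_mult[OF SO3_transpose[OF h] k(1)]] by simp
next
  assume "H = sym_group S"
  then show "has_sym_class (act2 h ` S) H"
    unfolding has_sym_class_iff sym_group_act2_image[OF h] using h by blast
qed

lemma normal_form_dim_sym_group:
  "S \<in> normal_forms \<Longrightarrow>
    (dim S, sym_group S) \<in> {(1, SO3), (2, O2), (3, D2), (4, Z2), (6, {mat 1})}"
  unfolding normal_forms_def
  by (elim insertE emptyE) (simp_all add: dim_scalar_mats dim_axial_mats dim_diagonal_mats
      dim_block_mats dim_Sym2 sym_group_scalar_mats sym_group_axial_mats sym_group_diagonal_mats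
      sym_group_block_mats sym_group_Sym2)

theorem proposition7p5:
  fixes rho :: "mat3 \<Rightarrow> 'v::euclidean_space \<Rightarrow> 'v" and v :: 'v
  assumes "SO3_rep rho"
  shows "dim (Cov2 rho v) \<in> {1, 2, 3, 4, 6}
    \<and> (has_sym_class (Cov2 rho v) SO3 \<longleftrightarrow> dim (Cov2 rho v) = 1)
    \<and> (has_sym_class (Cov2 rho v) O2 \<longleftrightarrow> dim (Cov2 rho v) = 2)
    \<and> (has_sym_class (Cov2 rho v) D2 \<longleftrightarrow> dim (Cov2 rho v) = 3)
    \<and> (has_sym_class (Cov2 rho v) Z2 \<longleftrightarrow> dim (Cov2 rho v) = 4)
    \<and> (has_sym_class (Cov2 rho v) {mat 1} \<longleftrightarrow> dim (Cov2 rho v) = 6)"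
proof -
  obtain h S where h: "h \<in> SO3" and S: "S \<in> normal_forms" and W: "Cov2 rho v = act2 h ` S"
    using jordan_subalgebra_normal_form[OF jordan_subalgebra_Cov2] unfolding rotated_normal_form_def by blast
  have invariants: "(dim (Cov2 rho v), sym_group S) \<in> {(1, SO3), (2, O2), (3, D2), (4, Z2), (6, {mat 1})}"
    using normal_form_dim_sym_group[OF S] by (simp add: W dim_act2_image[OF h])
  then have "sym_group S \<in> sym_classes"
    by (auto simp: sym_classes_def)
  then have "has_sym_class (Cov2 rho v) H \<longleftrightarrow> H = sym_group S" if "H \<in> sym_classes" for H
    unfolding W using has_sym_class_act2_image[OF h _ that] by blast
  then have classes: "has_sym_class (Cov2 rho v) SO3 \<longleftrightarrow> SO3 = sym_group S"
    "has_sym_class (Cov2 rho v) O2 \<longleftrightarrow> O2 = sym_group S"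
    "has_sym_class (Cov2 rho v) D2 \<longleftrightarrow> D2 = sym_group S"
    "has_sym_class (Cov2 rho v) Z2 \<longleftrightarrow> Z2 = sym_group S"
    "has_sym_class (Cov2 rho v) {mat 1} \<longleftrightarrow> {mat 1} = sym_group S"
    by (simp_all add: sym_classes_def)
  from invariants show ?thesis
    unfolding classes using sym_classes_distinct sym_classes_distinct[THEN not_sym]
    by (elim insertE emptyE) simp_all
qed

end
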